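(* Let $A,B\subseteq\mathbb{N}$ be such that $\lim_{n\to\infty}\frac{B(n)-A(n)}{n}$ exists and is $>0$. Then there is a set $D$ with $A\cap B\subseteq D\subseteq B$ and $\lim_{n\to\infty}\frac{D(n)-A(n)}{n}=0$. In particular, $B\setminus D\in\mathcal{D}$.
   Context: $\mathbb{N}=\{1,2,3,\dots\}$. For $A\subseteq\mathbb{N}$ let $A(n)=|A\cap[1,n]|$. Let $\mathcal{D}$ be the collection of all $A\subseteq\mathbb{N}$ for which the asymptotic density $d(A)=\lim_{n\to\infty}\frac{A(n)}{n}$ exists. *)

theory Defs
  imports Complex_Main
begin

definition cnt :: "nat set \<Rightarrow> nat \<Rightarrow> nat" where
  "cnt A n = card (A \<inter> {1..n})"

definition dens_sets :: "nat set set" where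
  "dens_sets = {A. A \<subseteq> {1..} \<and> (\<exists>d. (\<lambda>n. real (cnt A n) / real n) \<longlonglongrightarrow> d)}"

end

theory Submission
  imports Defs
begin

text \<open>Let g(n) = B(n) - A(n). It is integer valued, starts at 0, grows by at most one per
step, and grows exactly at the elements of B - A. Hence the set R of times at which g reaches a
new maximum lies in B - A, and R(n) = max {g(k) | k \<le> n}. Since g(n)/n \<rightarrow> c > 0, this running
maximum is also asymptotic to c n. Removing R from B gives D with D(n) - A(n) = g(n) - R(n) = o(n),
and B - D = R has density c.\<close>

lemma cnt_0 [simp]: "cnt X 0 = 0"
  by (simp add: cnt_def)

lemma cnt_Suc: "cnt X (Suc n) = cnt X n + (if Suc n \<in> X then 1 else 0)"
proof -
  have "X \<inter> {1..Suc n} =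
        (if Suc n \<in> X then insert (Suc n) (X \<inter> {1..n}) else X \<inter> {1..n})"
    using le_Suc_eq by auto
  then show ?thesis
    unfolding cnt_def by auto
qed

lemma cnt_mono: "Y \<subseteq> X \<Longrightarrow> cnt Y n \<le> cnt X n"
  unfolding cnt_def by (intro card_mono) auto

lemma cnt_Diff_subset: "Y \<subseteq> X \<Longrightarrow> cnt (X - Y) n = cnt X n - cnt Y n"
proof -
  assume "Y \<subseteq> X"
  then have "Y \<inter> {1..n} \<subseteq> X \<inter> {1..n}" by auto
  moreover have "(X - Y) \<inter> {1..n} = X \<inter> {1..n} - Y \<inter> {1..n}" by auto
  ultimately show ?thesis
    unfolding cnt_def by (simp add: card_Diff_subset)
qed

definition running_max :: "(nat \<Rightarrow> 'a::linorder) \<Rightarrow> nat \<Rightarrow> 'a" where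
  "running_max g n = Max (g ` {..n})"

definition record_times :: "(nat \<Rightarrow> 'a::linorder) \<Rightarrow> nat set" where
  "record_times g = {Suc n | n. running_max g n < g (Suc n)}"

lemma running_max_ge: "m \<le> n \<Longrightarrow> g m \<le> running_max g n"
  unfolding running_max_def by (intro Max_ge) auto

lemma running_max_0 [simp]: "running_max g 0 = g 0"
  by (simp add: running_max_def)

lemma running_max_Suc: "running_max g (Suc n) = max (running_max g n) (g (Suc n))"
  unfolding running_max_def atMost_Suc by (simp add: max.commute)

lemma running_max_le_iff: "running_max g n \<le> b \<longleftrightarrow> (\<forall>k\<le>n. g k \<le> b)"
  unfolding running_max_def by auto

lemma running_max_comp_mono:
  "mono f \<Longrightarrow> running_max (f \<circ> g) n = f (running_max g n)"
  unfolding running_max_def by (simp add: mono_Max_commute image_comp)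

lemma record_times_increase: "k \<in> record_times g \<Longrightarrow> \<exists>n. k = Suc n \<and> g n < g k"
  unfolding record_times_def by (auto intro: le_less_trans[OF running_max_ge[OF order_refl]])

lemma cnt_record_times:
  fixes g :: "nat \<Rightarrow> int"
  assumes "g 0 = 0" and "\<And>n. g (Suc n) \<le> g n + 1"
  shows "int (cnt (record_times g) n) = running_max g n"
proof (induction n)
  case 0
  then show ?case using assms(1) by simp
next
  case (Suc n)
  have "g (Suc n) \<le> running_max g n + 1"
    using assms(2)[of n] running_max_ge[of n n g] by simp
  moreover have "Suc n \<in> record_times g \<longleftrightarrow> running_max g n < g (Suc n)"
    unfolding record_times_def by auto
  ultimately show ?case
    using Suc.IH by (auto simp: cnt_Suc running_max_Suc)
qed

text \<open>Upper bound: once g(k) < b k for all k > N, the running maximum at n is at most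
max (max_{k\<le>N} g(k)) (b n), and the first term is o(n).\<close>

lemma running_max_over_n_tendsto:
  fixes g :: "nat \<Rightarrow> real"
  assumes lim: "(\<lambda>n. g n / real n) \<longlonglongrightarrow> c" and "c > 0"
  shows "(\<lambda>n. running_max g n / real n) \<longlonglongrightarrow> c"
proof (rule order_tendstoI)
  fix a assume "a < c"
  with order_tendstoD(1)[OF lim] have "\<forall>\<^sub>F n in sequentially. a < g n / real n"
    by blast
  then show "\<forall>\<^sub>F n in sequentially. a < running_max g n / real n"
  proof (rule eventually_mono)
    fix n assume "a < g n / real n"
    moreover have "g n / real n \<le> running_max g n / real n"
      using running_max_ge[of n n g] by (simp add: divide_right_mono)
    ultimately show "a < running_max g n / real n" by linarith
  qed
next
  fix a assume "c < a"
  define b where "b = (c + a) / 2"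
  have "c < b" "b < a" "b > 0"
    using \<open>c < a\<close> \<open>c > 0\<close> by (auto simp: b_def)
  obtain N where N: "\<And>k. k \<ge> N \<Longrightarrow> g k / real k < b"
    using order_tendstoD(2)[OF lim \<open>c < b\<close>] by (auto simp: eventually_sequentially)
  define K where "K = running_max g N"
  have bound: "running_max g n \<le> max K (b * real n)" if "n \<ge> N" for n
    unfolding running_max_le_iff
  proof (intro allI impI)
    fix k assume "k \<le> n"
    show "g k \<le> max K (b * real n)"
    proof (cases "k \<le> N")
      case True
      then show ?thesis using running_max_ge[of k N g] by (simp add: K_def)
    next
      case False
      then have "g k < b * real k"
        using N[of k] by (simp add: divide_less_eq mult.commute)
      also have "\<dots> \<le> b * real n"
        using \<open>k \<le> n\<close> \<open>b > 0\<close> by simp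
      finally show ?thesis by simp
    qed
  qed
  have "\<forall>\<^sub>F n in sequentially. K / real n < a"
    using \<open>c < a\<close> \<open>c > 0\<close> by (intro order_tendstoD(2)[OF lim_const_over_n]) simp
  moreover have "\<forall>\<^sub>F n in sequentially. n \<ge> max N 1"
    by (rule eventually_ge_at_top)
  ultimately show "\<forall>\<^sub>F n in sequentially. running_max g n / real n < a"
  proof eventually_elim
    case (elim n)
    then have "running_max g n / real n \<le> max K (b * real n) / real n"
      using bound[of n] by (simp add: divide_right_mono)
    also have "\<dots> = max (K / real n) b"
      using elim by (simp add: max_divide_distrib_right)
    finally show ?case
      using elim \<open>b < a\<close> by simp
  qed
qed

lemma cnt_diff_Suc:
  "int (cnt B (Suc n)) - int (cnt A (Suc n)) =
   int (cnt B n) - int (cnt A n) + (if Suc n \<in> B then 1 else 0) - (if Suc n \<in> A then 1 else 0)"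
  by (simp add: cnt_Suc)

theorem lemma3p13:
  fixes A B :: "nat set"
  assumes "A \<subseteq> {1..}" and "B \<subseteq> {1..}"
    and "(\<lambda>n. (real (cnt B n) - real (cnt A n)) / real n) \<longlonglongrightarrow> c"
    and "c > 0"
  shows "\<exists>D. A \<inter> B \<subseteq> D \<and> D \<subseteq> B
           \<and> (\<lambda>n. (real (cnt D n) - real (cnt A n)) / real n) \<longlonglongrightarrow> 0
           \<and> B - D \<in> dens_sets"
proof -
  define g where "g n = int (cnt B n) - int (cnt A n)" for n
  define R where "R = record_times g"
  have R_sub: "R \<subseteq> B - A"
  proof
    fix k assume "k \<in> R"
    then obtain n where "k = Suc n" "g n < g (Suc n)"
      using record_times_increase[of k g] by (auto simp: R_def)
    then show "k \<in> B - A"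
      using cnt_diff_Suc[of B n A] by (auto simp: g_def split: if_splits)
  qed
  have "g (Suc n) \<le> g n + 1" for n
    using cnt_diff_Suc[of B n A] by (simp add: g_def)
  then have cnt_R: "real (cnt R n) = real_of_int (running_max g n)" for n
    using arg_cong[OF cnt_record_times[of g n], of real_of_int] by (simp add: R_def g_def)
  have "(\<lambda>n. real_of_int (g n) / real n) \<longlonglongrightarrow> c"
    using assms(3) by (simp add: g_def)
  from running_max_over_n_tendsto[OF this \<open>c > 0\<close>]
  have lim_R: "(\<lambda>n. real (cnt R n) / real n) \<longlonglongrightarrow> c"
    by (simp add: cnt_R running_max_comp_mono[of real_of_int, unfolded comp_def] mono_def)
  have "(\<lambda>n. (real (cnt B n) - real (cnt A n)) / real n - real (cnt R n) / real n) \<longlonglongrightarrow> c - c"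
    using assms(3) lim_R by (rule tendsto_diff)
  moreover have "real (cnt (B - R) n) = real (cnt B n) - real (cnt R n)" for n
  proof -
    have "R \<subseteq> B" using R_sub by blast
    then show ?thesis by (simp add: cnt_Diff_subset cnt_mono of_nat_diff)
  qed
  ultimately have "(\<lambda>n. (real (cnt (B - R) n) - real (cnt A n)) / real n) \<longlonglongrightarrow> 0"
    by (simp add: diff_divide_distrib diff_right_commute)
  moreover have "B - (B - R) = R"
    using R_sub by blast
  then have "B - (B - R) \<in> dens_sets"
    using R_sub assms(2) lim_R by (auto simp: dens_sets_def)
  ultimately show ?thesis
    using R_sub by (intro exI[of _ "B - R"]) auto
qed

end
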